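(* Let $(a_k)_{k\ge1}$ be an increasing sequence of positive integers such that $\lim_{k\to\infty}a_{k+1}/a_k=\eta>1$ for some transcendental number $\eta$, and let $m\in\mathbb N$. Then there exists $\ell\in\mathbb N$ such that, writing $$S_{1,\ell}(\omega)=\sum_{k=1}^{\ell}\cos(2\pi a_k\omega),\qquad S_{\ell+1,n}(\omega)=\sum_{k=\ell+1}^{n}\cos(2\pi a_k\omega)$$ (the latter being $0$ if $n\le\ell$), for all $u,v\in\mathbb N$ with $u+v\le m$ and all $n\in\mathbb N$ we have $$\mathbb E\big[S_{1,\ell}^u S_{\ell+1,n}^v\big]=\mathbb E\big[S_{1,\ell}^u\big]\,\mathbb E\big[S_{\ell+1,n}^v\big],$$ where expectation is with respect to Lebesgue measure on $\omega\in[0,1]$. *)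

theory Defs
  imports "HOL-Analysis.Analysis" "HOL-Computational_Algebra.Polynomial"
begin

definition cos_sum :: "(nat \<Rightarrow> nat) \<Rightarrow> nat \<Rightarrow> nat \<Rightarrow> real \<Rightarrow> real" where
  "cos_sum a p q \<omega> = (\<Sum>k\<in>{p..q}. cos (2 * pi * real (a k) * \<omega>))"

definition E01 :: "(real \<Rightarrow> real) \<Rightarrow> real" where
  "E01 f = (LBINT \<omega>:{0..1}. f \<omega>)"

end

(*
  Expanding the powers, S_{1,l}^u and S_{l+1,n}^v are cosine polynomials whose frequencies are
  integer combinations sum_k e_k a_k with sum_k |e_k| <= u (over k <= l), resp. <= v (over k > l).
  The mean over [0,1] of a product of two cosine polynomials factorises as soon as no nonzero
  frequency of one occurs, up to sign, among the frequencies of the other.  So it suffices to find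
  l such that every integer relation sum_k e_k a_k = 0 with sum_k |e_k| <= m only involves indices
  k <= l.

  This follows from a lower bound, proved by induction on k: for large J,
  |sum_{i<=J} e_i a_i| >= delta a_J whenever e_J /= 0, sum_i |e_i| <= m and at most k nonzero
  coefficients lie more than L places below J.  For k = 0 the form is essentially
  a_J sum_{i<=L} e_{J-i} eta^(-i), since a_{J-i}/a_J -> eta^(-i); as eta is transcendental, these
  integer polynomials in 1/eta of bounded height are bounded away from 0.  In the induction step,
  either some nonzero coefficient lies between J-L-G and J-L, and the hypothesis for the window
  L+G applies, or all far coefficients sit below J-G, and a_{J-G} <= eps a_J makes their
  contribution negligible.
*)
theory Submission
  imports Defs
begin

abbreviation cos2pi :: "int \<Rightarrow> real \<Rightarrow> real" where
  "cos2pi N x \<equiv> cos (2 * pi * of_int N * x)"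

inductive cos_poly :: "int set \<Rightarrow> (real \<Rightarrow> real) \<Rightarrow> bool" for A where
  cos_poly_zero: "cos_poly A (\<lambda>_. 0)"
| cos_poly_add_cos: "N \<in> A \<Longrightarrow> cos_poly A f \<Longrightarrow> cos_poly A (\<lambda>x. c * cos2pi N x + f x)"

lemma cos_poly_continuous_on: "cos_poly A f \<Longrightarrow> continuous_on S f"
  by (induction rule: cos_poly.induct) (auto intro!: continuous_intros)

lemma cos_poly_cos2pi: "N \<in> A \<Longrightarrow> cos_poly A (cos2pi N)"
  using cos_poly_add_cos[OF _ cos_poly_zero, of N A 1] by simp

lemma cos_poly_mono: "cos_poly A f \<Longrightarrow> A \<subseteq> B \<Longrightarrow> cos_poly B f"
  by (induction rule: cos_poly.induct) (auto intro: cos_poly.intros)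

lemma cos_poly_add: "cos_poly A f \<Longrightarrow> cos_poly A g \<Longrightarrow> cos_poly A (\<lambda>x. f x + g x)"
proof (induction rule: cos_poly.induct)
  case (cos_poly_add_cos N f c)
  then have "cos_poly A (\<lambda>x. c * cos2pi N x + (f x + g x))"
    by (intro cos_poly.cos_poly_add_cos) auto
  then show ?case by (simp add: add.assoc)
qed simp

lemma cos_poly_cmult: "cos_poly A f \<Longrightarrow> cos_poly A (\<lambda>x. d * f x)"
proof (induction rule: cos_poly.induct)
  case (cos_poly_add_cos N f c)
  then have "cos_poly A (\<lambda>x. (d * c) * cos2pi N x + d * f x)"
    by (intro cos_poly.cos_poly_add_cos) auto
  then show ?case by (simp add: algebra_simps)
qed (simp add: cos_poly_zero)

lemma cos_poly_sum:
  "finite I \<Longrightarrow> (\<And>k. k \<in> I \<Longrightarrow> cos_poly A (f k)) \<Longrightarrow> cos_poly A (\<lambda>x. \<Sum>k\<in>I. f k x)"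
  by (induction I rule: finite_induct) (auto intro: cos_poly_zero cos_poly_add)

definition freq_sums :: "int set \<Rightarrow> int set \<Rightarrow> int set" where
  "freq_sums A B = {N + M |N M. N \<in> A \<and> M \<in> B} \<union> {N - M |N M. N \<in> A \<and> M \<in> B}"

lemma cos2pi_mult: "cos2pi N x * cos2pi M x = cos2pi (N - M) x / 2 + cos2pi (N + M) x / 2"
proof -
  have "2 * pi * of_int (N - M) * x = 2 * pi * of_int N * x - 2 * pi * of_int M * x"
    "2 * pi * of_int (N + M) * x = 2 * pi * of_int N * x + 2 * pi * of_int M * x"
    by (simp_all add: algebra_simps)
  then show ?thesis by (simp add: cos_times_cos)
qed

lemma cos_poly_cos2pi_mult:
  "cos_poly B g \<Longrightarrow> N \<in> A \<Longrightarrow> cos_poly (freq_sums A B) (\<lambda>x. cos2pi N x * g x)"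
proof (induction rule: cos_poly.induct)
  case (cos_poly_add_cos M g d)
  have "cos2pi N x * (d * cos2pi M x + g x) = d * (cos2pi N x * cos2pi M x) + cos2pi N x * g x" for x
    by algebra
  then have "(\<lambda>x. cos2pi N x * (d * cos2pi M x + g x))
      = (\<lambda>x. (d / 2) * cos2pi (N - M) x + ((d / 2) * cos2pi (N + M) x + cos2pi N x * g x))"
    unfolding cos2pi_mult by (simp add: algebra_simps)
  moreover have "cos_poly (freq_sums A B) (\<lambda>x. (d / 2) * cos2pi (N - M) x
      + ((d / 2) * cos2pi (N + M) x + cos2pi N x * g x))"
    using cos_poly_add_cos by (intro cos_poly.cos_poly_add_cos) (auto simp: freq_sums_def)
  ultimately show ?case by simp
qed (simp add: cos_poly_zero)

lemma cos_poly_mult: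
  "cos_poly A f \<Longrightarrow> cos_poly B g \<Longrightarrow> cos_poly (freq_sums A B) (\<lambda>x. f x * g x)"
proof (induction rule: cos_poly.induct)
  case (cos_poly_add_cos N f c)
  then have "cos_poly (freq_sums A B) (\<lambda>x. c * (cos2pi N x * g x) + f x * g x)"
    by (intro cos_poly_add cos_poly_cmult cos_poly_cos2pi_mult)
  then show ?case by (simp add: algebra_simps)
qed (simp add: cos_poly_zero)

definition int_combs :: "('i \<Rightarrow> int) \<Rightarrow> 'i set \<Rightarrow> nat \<Rightarrow> int set" where
  "int_combs b I u = {\<Sum>k\<in>I. e k * b k |e. (\<Sum>k\<in>I. \<bar>e k\<bar>) \<le> int u}"

lemma zero_in_int_combs: "0 \<in> int_combs b I u"
  unfolding int_combs_def by (auto intro!: exI[of _ "\<lambda>_. 0"])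

lemma uminus_in_int_combs: "N \<in> int_combs b I u \<Longrightarrow> - N \<in> int_combs b I u"
proof -
  assume "N \<in> int_combs b I u"
  then obtain e where "(\<Sum>k\<in>I. \<bar>e k\<bar>) \<le> int u" "N = (\<Sum>k\<in>I. e k * b k)"
    unfolding int_combs_def by blast
  then show ?thesis
    unfolding int_combs_def by (intro CollectI exI[of _ "\<lambda>k. - e k"]) (simp add: sum_negf)
qed

lemma freq_sums_int_combs_subset:
  assumes "finite I"
  shows "freq_sums (b ` I) (int_combs b I u) \<subseteq> int_combs b I (Suc u)"
proof
  fix N assume "N \<in> freq_sums (b ` I) (int_combs b I u)"
  then obtain k0 e where k0: "k0 \<in> I" and e: "(\<Sum>k\<in>I. \<bar>e k\<bar>) \<le> int u"
    and "N = b k0 + (\<Sum>k\<in>I. e k * b k) \<or> N = b k0 - (\<Sum>k\<in>I. e k * b k)"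
    unfolding freq_sums_def int_combs_def by blast
  then obtain s where s: "\<bar>s\<bar> = 1" and N: "N = b k0 + s * (\<Sum>k\<in>I. e k * b k)"
    by (metis abs_minus_cancel abs_one mult_minus_left mult_1 diff_conv_add_uminus)
  define e' where "e' k = of_bool (k = k0) + s * e k" for k
  have "\<bar>e' k\<bar> \<le> of_bool (k = k0) + \<bar>e k\<bar>" for k
    unfolding e'_def using abs_triangle_ineq[of "of_bool (k = k0)" "s * e k"] s
    by (simp add: abs_mult)
  then have "(\<Sum>k\<in>I. \<bar>e' k\<bar>) \<le> (\<Sum>k\<in>I. of_bool (k = k0) + \<bar>e k\<bar>)"
    by (intro sum_mono)
  also have "\<dots> \<le> int (Suc u)"
    using assms k0 e by (simp add: sum.distrib)
  finally have "(\<Sum>k\<in>I. \<bar>e' k\<bar>) \<le> int (Suc u)" .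
  moreover have "N = (\<Sum>k\<in>I. e' k * b k)"
    using assms k0 by (simp add: N e'_def algebra_simps sum.distrib sum_distrib_left)
  ultimately show "N \<in> int_combs b I (Suc u)"
    unfolding int_combs_def by blast
qed

lemma cos_poly_cos_sum: "cos_poly ((\<lambda>k. int (a k)) ` {p..q}) (cos_sum a p q)"
proof -
  have "cos_poly ((\<lambda>k. int (a k)) ` {p..q}) (\<lambda>x. cos (2 * pi * real (a k) * x))"
    if "k \<in> {p..q}" for k
    using cos_poly_cos2pi[of "int (a k)"] that by simp
  then show ?thesis
    unfolding cos_sum_def by (intro cos_poly_sum) auto
qed

lemma cos_poly_cos_sum_power:
  "cos_poly (int_combs (\<lambda>k. int (a k)) {p..q} u) (\<lambda>x. cos_sum a p q x ^ u)"
proof (induction u)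
  case 0
  show ?case using cos_poly_cos2pi[OF zero_in_int_combs] by simp
next
  case (Suc u)
  from cos_poly_mult[OF cos_poly_cos_sum Suc.IH]
  have "cos_poly (int_combs (\<lambda>k. int (a k)) {p..q} (Suc u))
      (\<lambda>x. cos_sum a p q x * cos_sum a p q x ^ u)"
    by (rule cos_poly_mono) (intro freq_sums_int_combs_subset finite_atLeastAtMost)
  then show ?case by simp
qed

lemma integral_cos2pi: "integral {0..1} (cos2pi K) = of_bool (K = 0)"
proof (cases "K = 0")
  case False
  define c where "c = 2 * pi * of_int K"
  have "c \<noteq> 0" using False by (simp add: c_def)
  then have "((\<lambda>x. sin (c * x) / c) has_vector_derivative cos (c * x)) (at x within {0..1})" for x
    unfolding has_real_derivative_iff_has_vector_derivative[symmetric]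
    by (auto intro!: derivative_eq_intros)
  then have "((\<lambda>x. cos (c * x)) has_integral (sin (c * 1) / c - sin (c * 0) / c)) {0..1}"
    by (intro fundamental_theorem_of_calculus) auto
  moreover have "sin (c * 1) = 0"
    unfolding c_def using sin_int_2pin[of K] by (simp add: mult.commute)
  ultimately show ?thesis
    using False by (simp add: integral_unique c_def mult.assoc)
qed simp

lemma integral_cos2pi_mult_cos2pi:
  assumes "\<bar>N\<bar> = \<bar>M\<bar> \<Longrightarrow> M = 0"
  shows "integral {0..1} (\<lambda>x. cos2pi N x * cos2pi M x) = of_bool (N = 0 \<and> M = 0)"
proof -
  have "integral {0..1} (\<lambda>x. cos2pi N x * cos2pi M x)
      = integral {0..1} (\<lambda>x. cos2pi (N - M) x / 2 + cos2pi (N + M) x / 2)"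
    by (simp only: cos2pi_mult)
  also have "\<dots> = integral {0..1} (cos2pi (N - M)) / 2 + integral {0..1} (cos2pi (N + M)) / 2"
    by (subst integral_add) (auto intro!: integrable_continuous_interval continuous_intros)
  also have "\<dots> = of_bool (N = M) / 2 + of_bool (N = - M) / 2"
    unfolding integral_cos2pi by auto
  also have "\<dots> = of_bool (N = 0 \<and> M = 0)"
    using assms by auto
  finally show ?thesis .
qed

lemma integral_cos2pi_mult_cos_poly:
  assumes "cos_poly B g" and "\<And>M. M \<in> B \<Longrightarrow> \<bar>N\<bar> = \<bar>M\<bar> \<Longrightarrow> M = 0"
  shows "integral {0..1} (\<lambda>x. cos2pi N x * g x) = of_bool (N = 0) * integral {0..1} g"
  using assms
proof induction
  case (cos_poly_add_cos M g d)
  have g: "continuous_on {0..1} g"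
    using cos_poly_add_cos.hyps(2) by (rule cos_poly_continuous_on)
  have "integral {0..1} (\<lambda>x. cos2pi N x * (d * cos2pi M x + g x))
      = integral {0..1} (\<lambda>x. d * (cos2pi N x * cos2pi M x) + cos2pi N x * g x)"
    by (simp add: distrib_left mult.left_commute)
  also have "\<dots> = d * integral {0..1} (\<lambda>x. cos2pi N x * cos2pi M x)
      + integral {0..1} (\<lambda>x. cos2pi N x * g x)"
    by (subst integral_add) (auto intro!: integrable_continuous_interval continuous_intros g)
  also have "\<dots> = of_bool (N = 0) * (d * integral {0..1} (cos2pi M) + integral {0..1} g)"
    using cos_poly_add_cos
    by (auto simp: integral_cos2pi_mult_cos2pi integral_cos2pi)
  also have "\<dots> = of_bool (N = 0) * integral {0..1} (\<lambda>x. d * cos2pi M x + g x)"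
    by (subst integral_add) (auto intro!: integrable_continuous_interval continuous_intros g)
  finally show ?case .
qed simp

lemma integral_cos_poly_mult:
  assumes "cos_poly A f" "cos_poly B g" and "\<And>N M. N \<in> A \<Longrightarrow> M \<in> B \<Longrightarrow> \<bar>N\<bar> = \<bar>M\<bar> \<Longrightarrow> M = 0"
  shows "integral {0..1} (\<lambda>x. f x * g x) = integral {0..1} f * integral {0..1} g"
  using assms
proof induction
  case (cos_poly_add_cos N f c)
  have fg: "continuous_on {0..1} f" "continuous_on {0..1} g"
    using cos_poly_add_cos.hyps(2) \<open>cos_poly B g\<close> by (auto intro: cos_poly_continuous_on)
  have "integral {0..1} (\<lambda>x. (c * cos2pi N x + f x) * g x)
      = integral {0..1} (\<lambda>x. c * (cos2pi N x * g x) + f x * g x)"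
    by (simp add: distrib_right mult.assoc)
  also have "\<dots> = c * integral {0..1} (\<lambda>x. cos2pi N x * g x) + integral {0..1} (\<lambda>x. f x * g x)"
    by (subst integral_add) (auto intro!: integrable_continuous_interval continuous_intros fg)
  also have "\<dots> = (c * integral {0..1} (cos2pi N) + integral {0..1} f) * integral {0..1} g"
  proof -
    have "integral {0..1} (\<lambda>x. cos2pi N x * g x) = of_bool (N = 0) * integral {0..1} g"
      using \<open>cos_poly B g\<close> by (rule integral_cos2pi_mult_cos_poly) (use cos_poly_add_cos in blast)
    with cos_poly_add_cos show ?thesis
      unfolding integral_cos2pi by (simp add: algebra_simps)
  qed
  also have "\<dots> = integral {0..1} (\<lambda>x. c * cos2pi N x + f x) * integral {0..1} g"
    by (subst integral_add) (auto intro!: integrable_continuous_interval continuous_intros fg)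
  finally show ?case .
qed simp

lemma E01_eq_integral: "continuous_on {0..1} f \<Longrightarrow> E01 f = integral {0..1} f"
  unfolding E01_def
  by (intro set_borel_integral_eq_integral(2))
    (use borel_integrable_compact[of "{0..1::real}" f] in \<open>simp add: set_integrable_def\<close>)

lemma E01_cos_poly_mult:
  assumes f: "cos_poly A f" and g: "cos_poly B g"
    and "\<And>N M. N \<in> A \<Longrightarrow> M \<in> B \<Longrightarrow> \<bar>N\<bar> = \<bar>M\<bar> \<Longrightarrow> M = 0"
  shows "E01 (\<lambda>x. f x * g x) = E01 f * E01 g"
  unfolding E01_eq_integral[OF cos_poly_continuous_on[OF cos_poly_mult[OF f g]]]
    E01_eq_integral[OF cos_poly_continuous_on[OF f]] E01_eq_integral[OF cos_poly_continuous_on[OF g]]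
  using assms by (rule integral_cos_poly_mult)

definition bounded_relations_within :: "(nat \<Rightarrow> int) \<Rightarrow> nat \<Rightarrow> nat \<Rightarrow> bool" where
  "bounded_relations_within b m l \<longleftrightarrow> (\<forall>n e. (\<Sum>k=1..n. \<bar>e k\<bar>) \<le> int m \<longrightarrow>
     (\<Sum>k=1..n. e k * b k) = 0 \<longrightarrow> (\<forall>k\<in>{l<..n}. e k = 0))"

lemma common_int_comb_eq_0:
  assumes rel: "bounded_relations_within b m l"
    and "N \<in> int_combs b {1..l} u" "N \<in> int_combs b {l+1..n} v" "u + v \<le> m"
  shows "N = 0"
proof -
  obtain e1 where e1: "(\<Sum>k=1..l. \<bar>e1 k\<bar>) \<le> int u" "N = (\<Sum>k=1..l. e1 k * b k)"
    using assms(2) unfolding int_combs_def by blast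
  obtain e2 where e2: "(\<Sum>k=l+1..n. \<bar>e2 k\<bar>) \<le> int v" "N = (\<Sum>k=l+1..n. e2 k * b k)"
    using assms(3) unfolding int_combs_def by blast
  define e where "e k = (if k \<le> l then e1 k else - e2 k)" for k
  have split: "(\<Sum>k=1..max l n. h k) = (\<Sum>k=1..l. h k) + (\<Sum>k=l+1..n. h k)" for h :: "nat \<Rightarrow> int"
  proof -
    have "{1..max l n} = {1..l} \<union> {l+1..n}" by auto
    then show ?thesis by (simp add: sum.union_disjoint)
  qed
  have "(\<Sum>k=1..max l n. \<bar>e k\<bar>) = (\<Sum>k=1..l. \<bar>e1 k\<bar>) + (\<Sum>k=l+1..n. \<bar>e2 k\<bar>)"
    unfolding split e_def by (intro arg_cong2[where f = "(+)"] sum.cong) auto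
  then have "(\<Sum>k=1..max l n. \<bar>e k\<bar>) \<le> int m"
    using e1(1) e2(1) \<open>u + v \<le> m\<close> by linarith
  moreover have "(\<Sum>k=1..max l n. e k * b k) = (\<Sum>k=1..l. e1 k * b k) - (\<Sum>k=l+1..n. e2 k * b k)"
    unfolding split e_def by (simp add: sum_negf[symmetric])
  then have "(\<Sum>k=1..max l n. e k * b k) = 0"
    using e1(2) e2(2) by simp
  ultimately have "e k = 0" if "k \<in> {l<..max l n}" for k
    using rel that unfolding bounded_relations_within_def by blast
  then have "e2 k = 0" if "k \<in> {l+1..n}" for k
    using that by (force simp: e_def)
  then show "N = 0"
    using e2(2) by simp
qed

lemma int_poly_transcendental_neq_0:
  fixes x :: real
  assumes "\<not> algebraic x" and "j \<le> L" and "c j \<noteq> 0"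
  shows "(\<Sum>i\<le>L. of_int (c i) * x ^ i) \<noteq> 0"
proof
  define P :: "real poly" where "P = (\<Sum>i\<le>L. monom (of_int (c i)) i)"
  have coeff_P: "coeff P n = (if n \<le> L then of_int (c n) else 0)" for n
    unfolding P_def by (simp add: coeff_sum)
  assume "(\<Sum>i\<le>L. of_int (c i) * x ^ i) = 0"
  then have "poly P x = 0"
    unfolding P_def by (simp add: poly_sum poly_monom)
  moreover have "coeff P j \<noteq> 0" and "coeff P n \<in> \<int>" for n
    using assms(2,3) by (simp_all add: coeff_P)
  ultimately have "algebraic x"
    by (intro algebraicI[of P]) auto
  with assms(1) show False ..
qed

lemma int_poly_transcendental_bounded_away:
  fixes x :: real
  assumes "\<not> algebraic x"
  shows "\<exists>\<delta>>0. \<forall>c. (\<forall>i\<le>L. \<bar>c i\<bar> \<le> int m) \<longrightarrow> c 0 \<noteq> 0 \<longrightarrow> \<delta> \<le> \<bar>\<Sum>i\<le>L. of_int (c i) * x ^ i\<bar>"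
proof -
  define C where "C = ({..L} \<rightarrow>\<^sub>E {-int m..int m}) \<inter> {c. c 0 \<noteq> 0}"
  define p where "p c = (\<Sum>i\<le>L. of_int (c i) * x ^ i)" for c :: "nat \<Rightarrow> int"
  define \<delta> where "\<delta> = Min (insert 1 ((\<lambda>c. \<bar>p c\<bar>) ` C))"
  have fin: "finite C"
    unfolding C_def by (intro finite_Int disjI1 finite_PiE) auto
  have nonzero: "p c \<noteq> 0" if "c \<in> C" for c
    using that assms unfolding p_def C_def by (intro int_poly_transcendental_neq_0[of _ 0]) auto
  have \<delta>_pos: "\<delta> > 0"
    unfolding \<delta>_def using fin nonzero by (subst Min_gr_iff) auto
  have \<delta>_le: "\<delta> \<le> \<bar>p c\<bar>" if "c \<in> C" for c
    unfolding \<delta>_def using fin that by auto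
  show ?thesis
  proof (intro exI[of _ \<delta>] conjI allI impI \<delta>_pos)
    fix c :: "nat \<Rightarrow> int" assume "\<forall>i\<le>L. \<bar>c i\<bar> \<le> int m" "c 0 \<noteq> 0"
    then have "restrict c {..L} \<in> C"
      unfolding C_def by (auto simp: PiE_iff abs_le_iff)
    then have "\<delta> \<le> \<bar>p (restrict c {..L})\<bar>"
      by (rule \<delta>_le)
    also have "p (restrict c {..L}) = p c"
      unfolding p_def by (intro sum.cong) auto
    finally have "\<delta> \<le> \<bar>p c\<bar>" .
    then show "\<delta> \<le> \<bar>\<Sum>i\<le>L. of_int (c i) * x ^ i\<bar>"
      by (simp only: p_def)
  qed
qed

lemma abs_sum_of_int_mult_le:
  assumes "\<And>i. i \<in> I \<Longrightarrow> e i \<noteq> 0 \<Longrightarrow> \<bar>w i\<bar> \<le> A"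
  shows "\<bar>\<Sum>i\<in>I. of_int (e i) * w i\<bar> \<le> of_int (\<Sum>i\<in>I. \<bar>e i\<bar>) * (A :: real)"
proof -
  have "\<bar>\<Sum>i\<in>I. of_int (e i) * w i\<bar> \<le> (\<Sum>i\<in>I. \<bar>of_int (e i)\<bar> * \<bar>w i\<bar>)"
    using sum_abs[of "\<lambda>i. of_int (e i) * w i" I] by (simp add: abs_mult)
  also have "\<dots> \<le> (\<Sum>i\<in>I. \<bar>of_int (e i)\<bar> * A)"
  proof (rule sum_mono)
    fix i assume "i \<in> I"
    then show "\<bar>of_int (e i)\<bar> * \<bar>w i\<bar> \<le> \<bar>of_int (e i)\<bar> * A"
      using assms by (cases "e i = 0") (simp_all add: mult_left_mono)
  qed
  finally show ?thesis
    by (simp add: sum_distrib_right)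
qed

lemma abs_sum_of_int_mult_perturb:
  fixes x y :: "'i \<Rightarrow> real"
  assumes "\<delta> \<le> \<bar>\<Sum>i\<in>I. of_int (c i) * y i\<bar>"
    and "\<And>i. i \<in> I \<Longrightarrow> \<bar>x i - y i\<bar> \<le> \<epsilon>"
    and "of_int (\<Sum>i\<in>I. \<bar>c i\<bar>) * \<epsilon> \<le> \<delta> / 2"
  shows "\<delta> / 2 \<le> \<bar>\<Sum>i\<in>I. of_int (c i) * x i\<bar>"
proof -
  have "(\<Sum>i\<in>I. of_int (c i) * y i) = (\<Sum>i\<in>I. of_int (c i) * x i) + (\<Sum>i\<in>I. of_int (c i) * (y i - x i))"
    by (simp add: right_diff_distrib sum_subtractf)
  moreover have "\<bar>\<Sum>i\<in>I. of_int (c i) * (y i - x i)\<bar> \<le> of_int (\<Sum>i\<in>I. \<bar>c i\<bar>) * \<epsilon>"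
    using assms(2) by (intro abs_sum_of_int_mult_le) (simp add: abs_minus_commute)
  ultimately show ?thesis
    using assms(1,3) abs_triangle_ineq[of "\<Sum>i\<in>I. of_int (c i) * x i" "\<Sum>i\<in>I. of_int (c i) * (y i - x i)"]
    by linarith
qed

lemma card_nonzero_le_sum_abs:
  fixes e :: "'i \<Rightarrow> int"
  assumes "finite I"
  shows "int (card {i\<in>I. e i \<noteq> 0}) \<le> (\<Sum>i\<in>I. \<bar>e i\<bar>)"
proof -
  have "int (card {i\<in>I. e i \<noteq> 0}) = (\<Sum>i\<in>{i\<in>I. e i \<noteq> 0}. 1)"
    by simp
  also have "\<dots> \<le> (\<Sum>i\<in>{i\<in>I. e i \<noteq> 0}. \<bar>e i\<bar>)"
    by (intro sum_mono) auto
  also have "\<dots> \<le> (\<Sum>i\<in>I. \<bar>e i\<bar>)"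
    using assms by (intro sum_mono2) auto
  finally show ?thesis .
qed

lemma sum_atLeastAtMost_reflect:
  fixes f :: "nat \<Rightarrow> 'a::comm_monoid_add"
  assumes "L \<le> J"
  shows "(\<Sum>k=J-L..J. f k) = (\<Sum>i\<le>L. f (J - i))"
  using assms by (intro sum.reindex_bij_witness[of _ "\<lambda>i. J - i" "\<lambda>k. J - k"]) auto

lemma max_nonzero_index:
  fixes e :: "nat \<Rightarrow> 'a::zero"
  assumes "k \<le> n" "e k \<noteq> 0"
  obtains J where "k \<le> J" "J \<le> n" "e J \<noteq> 0" "\<And>i. J < i \<Longrightarrow> i \<le> n \<Longrightarrow> e i = 0"
proof -
  define S where "S = {i. i \<le> n \<and> e i \<noteq> 0}"
  have fin: "finite S" and "k \<in> S"
    using assms by (simp_all add: S_def)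
  then have "Max S \<in> S" and "k \<le> Max S"
    by (blast intro: Max_in, rule Max_ge)
  show ?thesis
  proof (rule that[of "Max S"])
    show "k \<le> Max S" "Max S \<le> n" "e (Max S) \<noteq> 0"
      using \<open>Max S \<in> S\<close> \<open>k \<le> Max S\<close> by (simp_all add: S_def)
  next
    fix i assume "Max S < i" "i \<le> n"
    show "e i = 0"
    proof (rule ccontr)
      assume "e i \<noteq> 0"
      with \<open>i \<le> n\<close> have "i \<in> S"
        by (simp add: S_def)
      with \<open>Max S < i\<close> show False
        using Max_ge[OF fin] by (meson not_le)
    qed
  qed
qed

locale ratio_limit_seq =
  fixes a :: "nat \<Rightarrow> nat" and \<eta> :: real
  assumes pos: "\<And>k. k \<ge> 1 \<Longrightarrow> a k > 0"
    and incr: "\<And>k. k \<ge> 1 \<Longrightarrow> a k < a (Suc k)"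
    and ratio_tendsto: "(\<lambda>k. real (a (Suc k)) / real (a k)) \<longlonglongrightarrow> \<eta>"
    and ratio_gt_1: "\<eta> > 1"
begin

lemma a_mono: "1 \<le> i \<Longrightarrow> i \<le> j \<Longrightarrow> a i \<le> a j"
  by (rule lift_Suc_mono_le_ivl[of "{1..}" a]) (auto intro: less_imp_le[OF incr])

lemma shifted_ratio_tendsto: "(\<lambda>J. real (a (J - i)) / real (a J)) \<longlonglongrightarrow> (1 / \<eta>) ^ i"
proof -
  have "(\<lambda>M. real (a M) / real (a (M + i))) \<longlonglongrightarrow> (1 / \<eta>) ^ i"
  proof (induction i)
    case 0
    have "\<forall>\<^sub>F M in sequentially. 1 = real (a M) / real (a (M + 0))"
      using eventually_ge_at_top[of 1] by eventually_elim (simp add: pos less_imp_neq[symmetric])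
    then show ?case
      by (rule Lim_transform_eventually[rotated]) simp
  next
    case (Suc i)
    have "(\<lambda>M. real (a (Suc (M + i))) / real (a (M + i))) \<longlonglongrightarrow> \<eta>"
      using LIMSEQ_ignore_initial_segment[OF ratio_tendsto, of i] by simp
    then have "(\<lambda>M. real (a M) / real (a (M + i)) / (real (a (Suc (M + i))) / real (a (M + i))))
        \<longlonglongrightarrow> (1 / \<eta>) ^ i / \<eta>"
      using Suc ratio_gt_1 by (intro tendsto_divide) auto
    moreover have "\<forall>\<^sub>F M in sequentially.
        real (a M) / real (a (M + i)) / (real (a (Suc (M + i))) / real (a (M + i)))
        = real (a M) / real (a (M + Suc i))"
      using eventually_ge_at_top[of 1] by eventually_elim (simp add: pos less_imp_neq[symmetric])
    ultimately have "(\<lambda>M. real (a M) / real (a (M + Suc i))) \<longlonglongrightarrow> (1 / \<eta>) ^ i / \<eta>"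
      by (rule Lim_transform_eventually)
    then show ?case
      unfolding power_Suc2 by (simp only: times_divide_eq_right mult_1_right)
  qed
  then have "(\<lambda>M. real (a (M + i - i)) / real (a (M + i))) \<longlonglongrightarrow> (1 / \<eta>) ^ i"
    by (simp only: add_diff_cancel_right')
  then show ?thesis
    by (rule LIMSEQ_offset)
qed

lemma eventually_shift_le:
  assumes "\<epsilon> > 0"
  shows "\<exists>G. \<forall>\<^sub>F J in sequentially. real (a (J - G)) \<le> \<epsilon> * real (a J)"
proof -
  have "(\<lambda>G. (1 / \<eta>) ^ G) \<longlonglongrightarrow> 0"
    using ratio_gt_1 by (intro LIMSEQ_power_zero) auto
  from order_tendstoD(2)[OF this assms] obtain G where "(1 / \<eta>) ^ G < \<epsilon>"
    unfolding eventually_sequentially by blast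
  from order_tendstoD(2)[OF shifted_ratio_tendsto this]
  have "\<forall>\<^sub>F J in sequentially. real (a (J - G)) \<le> \<epsilon> * real (a J)"
    using eventually_ge_at_top[of 1]
  proof eventually_elim
    case (elim J)
    have "real (a J) > 0"
      using pos[OF elim(2)] by simp
    with elim(1) show ?case
      by (simp add: pos_divide_less_eq)
  qed
  then show ?thesis ..
qed

lemma abs_sum_le_shift:
  assumes "\<And>i. i \<in> {1..J} \<Longrightarrow> e i \<noteq> 0 \<Longrightarrow> i \<le> J - G"
  shows "\<bar>\<Sum>i=1..J. of_int (e i) * real (a i)\<bar> \<le> of_int (\<Sum>i=1..J. \<bar>e i\<bar>) * real (a (J - G))"
  using assms by (intro abs_sum_of_int_mult_le) (simp add: a_mono)

lemma window_sum_bound_at: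
  assumes "J \<ge> 1" and "\<forall>i\<in>{..L}. \<bar>real (a (J - i)) / real (a J) - (1 / \<eta>) ^ i\<bar> < \<epsilon>"
    and "\<delta> \<le> \<bar>\<Sum>i\<le>L. of_int (c i) * (1 / \<eta>) ^ i\<bar>" and "of_int (\<Sum>i\<le>L. \<bar>c i\<bar>) * \<epsilon> \<le> \<delta> / 2"
  shows "\<delta> / 2 * real (a J) \<le> \<bar>\<Sum>i\<le>L. of_int (c i) * real (a (J - i))\<bar>"
proof -
  have "\<delta> / 2 \<le> \<bar>\<Sum>i\<le>L. of_int (c i) * (real (a (J - i)) / real (a J))\<bar>"
    using assms(2-4) by (intro abs_sum_of_int_mult_perturb) (auto intro: less_imp_le)
  moreover have "real (a J) > 0"
    using pos[OF assms(1)] by simp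
  ultimately show ?thesis
    by (simp add: sum_divide_distrib[symmetric] pos_le_divide_eq)
qed

definition top_term_bound :: "nat \<Rightarrow> nat \<Rightarrow> nat \<Rightarrow> real \<Rightarrow> nat \<Rightarrow> bool" where
  "top_term_bound m k L \<delta> J \<longleftrightarrow> (\<forall>e::nat \<Rightarrow> int. (\<Sum>i=1..J. \<bar>e i\<bar>) \<le> int m \<longrightarrow> e J \<noteq> 0 \<longrightarrow>
     card {i\<in>{1..J}. i < J - L \<and> e i \<noteq> 0} \<le> k \<longrightarrow>
     \<delta> * real (a J) \<le> \<bar>\<Sum>i=1..J. of_int (e i) * real (a i)\<bar>)"

definition top_term_dominates :: "nat \<Rightarrow> nat \<Rightarrow> nat \<Rightarrow> bool" where
  "top_term_dominates m k L \<longleftrightarrow> (\<exists>\<delta>>0. \<forall>\<^sub>F J in sequentially. top_term_bound m k L \<delta> J)"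

lemma near_far_bound:
  assumes far: "\<And>i. i \<in> {1..J} \<Longrightarrow> i < J - L \<Longrightarrow> e i \<noteq> 0 \<Longrightarrow> i \<le> J - G"
    and weight: "(\<Sum>i=1..J. \<bar>e i\<bar>) \<le> int m"
    and small: "real m * real (a (J - G)) \<le> \<delta> / 2 * real (a J)"
    and near: "\<delta> * real (a J) \<le> \<bar>\<Sum>i=1..J. of_int (if i < J - L then 0 else e i) * real (a i)\<bar>"
  shows "\<delta> / 2 * real (a J) \<le> \<bar>\<Sum>i=1..J. of_int (e i) * real (a i)\<bar>"
proof -
  define far_e where "far_e i = (if i < J - L then e i else 0)" for i
  have split: "(\<Sum>i=1..J. of_int (e i) * real (a i))
      = (\<Sum>i=1..J. of_int (if i < J - L then 0 else e i) * real (a i))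
        + (\<Sum>i=1..J. of_int (far_e i) * real (a i))"
    unfolding sum.distrib[symmetric] by (intro sum.cong) (auto simp: far_e_def)
  have "(\<Sum>i=1..J. \<bar>far_e i\<bar>) \<le> (\<Sum>i=1..J. \<bar>e i\<bar>)"
    by (intro sum_mono) (simp add: far_e_def)
  then have far_weight: "real_of_int (\<Sum>i=1..J. \<bar>far_e i\<bar>) \<le> real m"
    using weight by linarith
  have "\<bar>\<Sum>i=1..J. of_int (far_e i) * real (a i)\<bar> \<le> of_int (\<Sum>i=1..J. \<bar>far_e i\<bar>) * real (a (J - G))"
    using far by (intro abs_sum_le_shift) (auto simp: far_e_def split: if_splits)
  also have "\<dots> \<le> real m * real (a (J - G))"
    using far_weight by (intro mult_right_mono) simp_all
  finally show ?thesis
    using split near small by linarith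
qed

end

locale transcendental_ratio_seq = ratio_limit_seq +
  assumes transcendental: "\<not> algebraic \<eta>"
begin

lemma window_sum_lower_bound:
  "\<exists>\<delta>>0. \<forall>\<^sub>F J in sequentially. \<forall>c::nat \<Rightarrow> int. (\<Sum>i\<le>L. \<bar>c i\<bar>) \<le> int m \<longrightarrow> c 0 \<noteq> 0 \<longrightarrow>
     \<delta> * real (a J) \<le> \<bar>\<Sum>i\<le>L. of_int (c i) * real (a (J - i))\<bar>"
proof -
  have "\<not> algebraic (1 / \<eta>)"
    using transcendental algebraic_inverse[of "1 / \<eta>"] by auto
  then obtain \<delta> where \<delta>: "\<delta> > 0" and bound: "\<And>c. \<forall>i\<le>L. \<bar>c i\<bar> \<le> int m \<Longrightarrow> c 0 \<noteq> 0 \<Longrightarrow>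
      \<delta> \<le> \<bar>\<Sum>i\<le>L. of_int (c i) * (1 / \<eta>) ^ i\<bar>"
    using int_poly_transcendental_bounded_away[of "1 / \<eta>" L m] by blast
  define \<epsilon> where "\<epsilon> = \<delta> / (2 * (real m + 1))"
  have \<epsilon>: "\<epsilon> > 0" "real m * \<epsilon> \<le> \<delta> / 2"
    using \<delta> by (auto simp: \<epsilon>_def field_simps)
  have "\<forall>\<^sub>F J in sequentially. \<forall>i\<in>{..L}. \<bar>real (a (J - i)) / real (a J) - (1 / \<eta>) ^ i\<bar> < \<epsilon>"
    using tendstoD[OF shifted_ratio_tendsto \<epsilon>(1)] by (intro eventually_ball_finite) (auto simp: dist_real_def)
  then have lower: "\<forall>\<^sub>F J in sequentially. \<forall>c::nat \<Rightarrow> int. (\<Sum>i\<le>L. \<bar>c i\<bar>) \<le> int m \<longrightarrow> c 0 \<noteq> 0 \<longrightarrow>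
     \<delta> / 2 * real (a J) \<le> \<bar>\<Sum>i\<le>L. of_int (c i) * real (a (J - i))\<bar>"
    using eventually_ge_at_top[of 1]
  proof eventually_elim
    case (elim J)
    show ?case
    proof (intro allI impI)
      fix c :: "nat \<Rightarrow> int" assume c: "(\<Sum>i\<le>L. \<bar>c i\<bar>) \<le> int m" "c 0 \<noteq> 0"
      have "\<bar>c i\<bar> \<le> int m" if "i \<le> L" for i
      proof -
        have "\<bar>c i\<bar> \<le> (\<Sum>i\<le>L. \<bar>c i\<bar>)"
          using that by (intro member_le_sum) auto
        with c(1) show ?thesis by linarith
      qed
      then have "\<delta> \<le> \<bar>\<Sum>i\<le>L. of_int (c i) * (1 / \<eta>) ^ i\<bar>"
        using c(2) by (intro bound) auto
      moreover have "of_int (\<Sum>i\<le>L. \<bar>c i\<bar>) * \<epsilon> \<le> real m * \<epsilon>"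
        using of_int_le_iff[THEN iffD2, OF c(1)] \<epsilon>(1) by (intro mult_right_mono) simp_all
      ultimately show "\<delta> / 2 * real (a J) \<le> \<bar>\<Sum>i\<le>L. of_int (c i) * real (a (J - i))\<bar>"
        using elim \<epsilon>(2) by (intro window_sum_bound_at) auto
    qed
  qed
  show ?thesis
  proof (intro exI[of _ "\<delta> / 2"] conjI)
    show "\<delta> / 2 > 0"
      using \<delta> by simp
  qed (fact lower)
qed

lemma top_term_dominates_0: "top_term_dominates m 0 L"
proof -
  obtain \<delta> where \<delta>: "\<delta> > 0" and window: "\<forall>\<^sub>F J in sequentially. \<forall>c::nat \<Rightarrow> int.
      (\<Sum>i\<le>L. \<bar>c i\<bar>) \<le> int m \<longrightarrow> c 0 \<noteq> 0 \<longrightarrow>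
      \<delta> * real (a J) \<le> \<bar>\<Sum>i\<le>L. of_int (c i) * real (a (J - i))\<bar>"
    using window_sum_lower_bound[of L m] by blast
  have bound: "\<forall>\<^sub>F J in sequentially. top_term_bound m 0 L \<delta> J"
    using window eventually_gt_at_top[of L]
  proof eventually_elim
    case (elim J)
    show ?case
      unfolding top_term_bound_def
    proof (intro allI impI)
      fix e :: "nat \<Rightarrow> int"
      assume e: "(\<Sum>i=1..J. \<bar>e i\<bar>) \<le> int m" "e J \<noteq> 0"
        "card {i\<in>{1..J}. i < J - L \<and> e i \<noteq> 0} \<le> 0"
      have window_sub: "{J-L..J} \<subseteq> {1..J}"
        using elim(2) by auto
      have "{i\<in>{1..J}. i < J - L \<and> e i \<noteq> 0} = {}"
        using e(3) by simp
      then have "(\<Sum>i=1..J. of_int (e i) * real (a i)) = (\<Sum>k=J-L..J. of_int (e k) * real (a k))"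
        using window_sub by (intro sum.mono_neutral_right) auto
      also have "\<dots> = (\<Sum>i\<le>L. of_int (e (J - i)) * real (a (J - i)))"
        using elim(2) by (intro sum_atLeastAtMost_reflect) simp
      finally have sum_eq: "(\<Sum>i=1..J. of_int (e i) * real (a i)) = \<dots>" .
      have "(\<Sum>i\<le>L. \<bar>e (J - i)\<bar>) = (\<Sum>k=J-L..J. \<bar>e k\<bar>)"
        using elim(2) by (intro sum_atLeastAtMost_reflect[symmetric]) simp
      also have "\<dots> \<le> (\<Sum>i=1..J. \<bar>e i\<bar>)"
        using window_sub by (intro sum_mono2) auto
      finally have "(\<Sum>i\<le>L. \<bar>e (J - i)\<bar>) \<le> int m"
        using e(1) by linarith
      with elim(1)[rule_format, of "\<lambda>i. e (J - i)"] e(2)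
      show "\<delta> * real (a J) \<le> \<bar>\<Sum>i=1..J. of_int (e i) * real (a i)\<bar>"
        unfolding sum_eq by simp
    qed
  qed
  show ?thesis
    unfolding top_term_dominates_def
  proof (intro exI[of _ \<delta>] conjI)
    show "\<delta> > 0" by (fact \<delta>)
  qed (fact bound)
qed

lemma top_term_bound_Suc:
  assumes near: "top_term_bound m 0 L \<delta>\<^sub>0 J" and far: "top_term_bound m k (L + G) \<delta>\<^sub>1 J"
    and small: "real m * real (a (J - G)) \<le> \<delta>\<^sub>0 / 2 * real (a J)" and "J \<ge> 1"
  shows "top_term_bound m (Suc k) L (min (\<delta>\<^sub>0 / 2) \<delta>\<^sub>1) J"
  unfolding top_term_bound_def
proof (intro allI impI)
  fix e :: "nat \<Rightarrow> int"
  assume e: "(\<Sum>i=1..J. \<bar>e i\<bar>) \<le> int m" "e J \<noteq> 0"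
    "card {i\<in>{1..J}. i < J - L \<and> e i \<noteq> 0} \<le> Suc k"
  have aJ: "real (a J) > 0"
    using pos[OF \<open>J \<ge> 1\<close>] by simp
  consider (band) i\<^sub>0 where "i\<^sub>0 \<in> {i\<in>{1..J}. i < J - L \<and> e i \<noteq> 0}" "J - (L + G) \<le> i\<^sub>0"
    | (gap) "\<And>i. i \<in> {1..J} \<Longrightarrow> i < J - L \<Longrightarrow> e i \<noteq> 0 \<Longrightarrow> i < J - (L + G)"
    using not_less by blast
  then show "min (\<delta>\<^sub>0 / 2) \<delta>\<^sub>1 * real (a J) \<le> \<bar>\<Sum>i=1..J. of_int (e i) * real (a i)\<bar>"
  proof cases
    case band
    then have "{i\<in>{1..J}. i < J - (L + G) \<and> e i \<noteq> 0} \<subseteq> {i\<in>{1..J}. i < J - L \<and> e i \<noteq> 0} - {i\<^sub>0}"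
      by auto
    then have "card {i\<in>{1..J}. i < J - (L + G) \<and> e i \<noteq> 0} \<le> card ({i\<in>{1..J}. i < J - L \<and> e i \<noteq> 0} - {i\<^sub>0})"
      by (intro card_mono) simp_all
    also have "\<dots> < card {i\<in>{1..J}. i < J - L \<and> e i \<noteq> 0}"
      using band(1) by (intro card_Diff1_less) simp_all
    finally have "card {i\<in>{1..J}. i < J - (L + G) \<and> e i \<noteq> 0} < card {i\<in>{1..J}. i < J - L \<and> e i \<noteq> 0}" .
    with e(3) have "card {i\<in>{1..J}. i < J - (L + G) \<and> e i \<noteq> 0} \<le> k"
      by linarith
    then have "\<delta>\<^sub>1 * real (a J) \<le> \<bar>\<Sum>i=1..J. of_int (e i) * real (a i)\<bar>"
      by (rule far[unfolded top_term_bound_def, rule_format, OF e(1,2)])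
    moreover have "min (\<delta>\<^sub>0 / 2) \<delta>\<^sub>1 * real (a J) \<le> \<delta>\<^sub>1 * real (a J)"
      using aJ by (intro mult_right_mono) auto
    ultimately show ?thesis
      by linarith
  next
    case gap
    have "(\<Sum>i=1..J. \<bar>if i < J - L then 0 else e i\<bar>) \<le> (\<Sum>i=1..J. \<bar>e i\<bar>)"
      by (intro sum_mono) simp
    then have "\<delta>\<^sub>0 * real (a J) \<le> \<bar>\<Sum>i=1..J. of_int (if i < J - L then 0 else e i) * real (a i)\<bar>"
      using e(1,2) near[unfolded top_term_bound_def, rule_format, of "\<lambda>i. if i < J - L then 0 else e i"]
      by simp
    moreover have "i \<le> J - G" if "i \<in> {1..J}" "i < J - L" "e i \<noteq> 0" for i
      using gap[OF that] by linarith
    ultimately have "\<delta>\<^sub>0 / 2 * real (a J) \<le> \<bar>\<Sum>i=1..J. of_int (e i) * real (a i)\<bar>"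
      using near_far_bound[OF _ e(1) small] by blast
    moreover have "min (\<delta>\<^sub>0 / 2) \<delta>\<^sub>1 * real (a J) \<le> \<delta>\<^sub>0 / 2 * real (a J)"
      using aJ by (intro mult_right_mono) auto
    ultimately show ?thesis
      by linarith
  qed
qed

lemma top_term_dominates_all: "top_term_dominates m k L"
proof (induction k arbitrary: L)
  case 0
  show ?case
    by (rule top_term_dominates_0)
next
  case (Suc k)
  obtain \<delta>\<^sub>0 where \<delta>\<^sub>0: "\<delta>\<^sub>0 > 0" and near: "\<forall>\<^sub>F J in sequentially. top_term_bound m 0 L \<delta>\<^sub>0 J"
    using top_term_dominates_0 unfolding top_term_dominates_def by blast
  have "\<delta>\<^sub>0 / (2 * (real m + 1)) > 0"
    using \<delta>\<^sub>0 by simp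
  then obtain G where gap: "\<forall>\<^sub>F J in sequentially. real (a (J - G)) \<le> \<delta>\<^sub>0 / (2 * (real m + 1)) * real (a J)"
    using eventually_shift_le by blast
  obtain \<delta>\<^sub>1 where \<delta>\<^sub>1: "\<delta>\<^sub>1 > 0" and far: "\<forall>\<^sub>F J in sequentially. top_term_bound m k (L + G) \<delta>\<^sub>1 J"
    using Suc.IH[of "L + G"] unfolding top_term_dominates_def by blast
  have bound: "\<forall>\<^sub>F J in sequentially. top_term_bound m (Suc k) L (min (\<delta>\<^sub>0 / 2) \<delta>\<^sub>1) J"
    using near far gap eventually_ge_at_top[of 1]
  proof eventually_elim
    case (elim J)
    have "real m * real (a (J - G)) \<le> real m * (\<delta>\<^sub>0 / (2 * (real m + 1)) * real (a J))"
      using elim(3) by (intro mult_left_mono) auto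
    also have "\<dots> \<le> \<delta>\<^sub>0 / 2 * real (a J)"
      using \<delta>\<^sub>0 by (simp add: field_simps)
    finally show ?case
      by (rule top_term_bound_Suc[OF elim(1,2) _ elim(4)])
  qed
  show ?case
    unfolding top_term_dominates_def
  proof (intro exI[of _ "min (\<delta>\<^sub>0 / 2) \<delta>\<^sub>1"] conjI)
    show "min (\<delta>\<^sub>0 / 2) \<delta>\<^sub>1 > 0"
      using \<delta>\<^sub>0 \<delta>\<^sub>1 by simp
  qed (fact bound)
qed

lemma relation_top_coeff_eq_0:
  assumes bound: "top_term_bound m m 0 \<delta> J" and "\<delta> > 0" "J \<ge> 1"
    and weight: "(\<Sum>i=1..J. \<bar>e i\<bar>) \<le> int m" and rel: "(\<Sum>i=1..J. e i * int (a i)) = 0"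
  shows "e J = 0"
proof (rule ccontr)
  assume "e J \<noteq> 0"
  have "card {i\<in>{1..J}. i < J - 0 \<and> e i \<noteq> 0} \<le> card {i\<in>{1..J}. e i \<noteq> 0}"
    by (intro card_mono) auto
  then have card: "card {i\<in>{1..J}. i < J - 0 \<and> e i \<noteq> 0} \<le> m"
    using card_nonzero_le_sum_abs[OF finite_atLeastAtMost, of 1 J e] weight by linarith
  have "(\<Sum>i=1..J. of_int (e i) * real (a i)) = of_int (\<Sum>i=1..J. e i * int (a i))"
    by (simp add: of_int_sum)
  also have "\<dots> = 0"
    unfolding rel by simp
  finally have "\<delta> * real (a J) \<le> 0"
    using bound[unfolded top_term_bound_def, rule_format, OF weight \<open>e J \<noteq> 0\<close> card] by simp
  moreover have "real (a J) > 0"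
    using pos[OF \<open>J \<ge> 1\<close>] by simp
  ultimately show False
    using \<open>\<delta> > 0\<close> by (simp add: mult_le_0_iff)
qed

lemma bounded_relations_within_exists: "\<exists>l\<ge>1. bounded_relations_within (\<lambda>k. int (a k)) m l"
proof -
  obtain \<delta> J\<^sub>0 where \<delta>: "\<delta> > 0" and bound: "\<And>J. J \<ge> J\<^sub>0 \<Longrightarrow> top_term_bound m m 0 \<delta> J"
    using top_term_dominates_all[of m m 0] unfolding top_term_dominates_def eventually_sequentially by blast
  have "bounded_relations_within (\<lambda>k. int (a k)) m (max 1 J\<^sub>0)"
    unfolding bounded_relations_within_def
  proof (intro allI impI ballI)
    fix n e k
    assume weight: "(\<Sum>k=1..n. \<bar>e k\<bar>) \<le> int m" and rel: "(\<Sum>k=1..n. e k * int (a k)) = 0"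
      and k: "k \<in> {max 1 J\<^sub>0<..n}"
    show "e k = 0"
    proof (rule ccontr)
      assume "e k \<noteq> 0"
      with k obtain J where J: "k \<le> J" "J \<le> n" "e J \<noteq> 0"
        and vanish: "\<And>i. J < i \<Longrightarrow> i \<le> n \<Longrightarrow> e i = 0"
        by (auto elim: max_nonzero_index)
      have "(\<Sum>i=1..J. \<bar>e i\<bar>) \<le> (\<Sum>i=1..n. \<bar>e i\<bar>)"
        using J(2) by (intro sum_mono2) auto
      then have weight_J: "(\<Sum>i=1..J. \<bar>e i\<bar>) \<le> int m"
        using weight by linarith
      have "(\<Sum>i=1..n. e i * int (a i)) = (\<Sum>i=1..J. e i * int (a i))"
        using J(2) vanish by (intro sum.mono_neutral_right) auto
      with rel have "(\<Sum>i=1..J. e i * int (a i)) = 0"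
        by simp
      moreover have "J \<ge> J\<^sub>0" "J \<ge> 1"
        using J(1) k by simp_all
      ultimately have "e J = 0"
        using relation_top_coeff_eq_0[OF bound \<delta>] weight_J by blast
      with J(3) show False ..
    qed
  qed
  then show ?thesis
  proof (intro exI[of _ "max 1 J\<^sub>0"] conjI)
    show "max 1 J\<^sub>0 \<ge> 1" by simp
  qed
qed

end

theorem lemma2p2:
  fixes a :: "nat \<Rightarrow> nat" and \<eta> :: real and m :: nat
  assumes pos: "\<And>k. k \<ge> 1 \<Longrightarrow> a k > 0"
    and incr: "\<And>k. k \<ge> 1 \<Longrightarrow> a k < a (Suc k)"
    and lim: "(\<lambda>k. real (a (Suc k)) / real (a k)) \<longlonglongrightarrow> \<eta>"
    and gt1: "\<eta> > 1"
    and transc: "\<not> algebraic \<eta>"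
  shows "\<exists>l::nat. l \<ge> 1 \<and>
    (\<forall>u v n :: nat. u + v \<le> m \<longrightarrow>
      E01 (\<lambda>\<omega>. cos_sum a 1 l \<omega> ^ u * cos_sum a (l + 1) n \<omega> ^ v)
      = E01 (\<lambda>\<omega>. cos_sum a 1 l \<omega> ^ u) * E01 (\<lambda>\<omega>. cos_sum a (l + 1) n \<omega> ^ v))"
proof -
  interpret transcendental_ratio_seq a \<eta>
    using assms by unfold_locales
  obtain l where "l \<ge> 1" and rel: "bounded_relations_within (\<lambda>k. int (a k)) m l"
    using bounded_relations_within_exists by blast
  have independent: "E01 (\<lambda>\<omega>. cos_sum a 1 l \<omega> ^ u * cos_sum a (l + 1) n \<omega> ^ v)
      = E01 (\<lambda>\<omega>. cos_sum a 1 l \<omega> ^ u) * E01 (\<lambda>\<omega>. cos_sum a (l + 1) n \<omega> ^ v)"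
    if "u + v \<le> m" for u v n
  proof (rule E01_cos_poly_mult[OF cos_poly_cos_sum_power cos_poly_cos_sum_power])
    fix N M
    assume N: "N \<in> int_combs (\<lambda>k. int (a k)) {1..l} u" and M: "M \<in> int_combs (\<lambda>k. int (a k)) {l + 1..n} v"
      and "\<bar>N\<bar> = \<bar>M\<bar>"
    then have "M \<in> int_combs (\<lambda>k. int (a k)) {1..l} u"
      using uminus_in_int_combs[OF N] unfolding abs_eq_iff by auto
    with M rel \<open>u + v \<le> m\<close> show "M = 0"
      by (intro common_int_comb_eq_0)
  qed
  show ?thesis
  proof (intro exI[of _ l] conjI allI impI)
    show "l \<ge> 1" by fact
  qed (erule independent)
qed

end
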